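(* Let $M_{i}=\begin{pmatrix}a_{i} & b_{i}\\ c_{i} & d_{i}\end{pmatrix}$, $i\ge1$, be any sequence of $2\times2$ complex matrices, and let $(G_i,F_i)$, $i\ge1$, be a sequence of nonzero row vectors. Then $(G_{i},F_{i})$ is a left eigenvector of $(M_i)$ (with some eigenvalues $\lambda_i$) if and only if $\begin{pmatrix}F_{i}\\ -G_{i}\end{pmatrix}$ is a right eigenvector of $(M_i)$ (with some eigenvalues $\alpha_i$). Moreover, if $(G_i,F_i)$ is a left eigenvector with eigenvalues $\lambda_i$, $\begin{pmatrix}F_{i}\\ -G_{i}\end{pmatrix}$ is the corresponding right eigenvector with eigenvalues $\alpha_i$, and $F_{i}\neq0$ for all $i$, then setting $U_{i}=\begin{pmatrix}F_{i}^{-1} & 0\\ G_{i} & F_{i}\end{pmatrix}$ we have \[ U_{i}M_{i}U_{i+1}^{-1}=\begin{pmatrix}\alpha_{i} & \frac{b_{i}}{F_{i}F_{i+1}}\\ 0 & \lambda_{i}\end{pmatrix}, \] and in particular $\alpha_{i}\lambda_{i}=\det(M_{i})$.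
   Context: For a sequence of $2\times2$ matrices $M_i$: a sequence $v(i)$ of nonzero row vectors is a left eigenvector with eigenvalues $\lambda(i)\in\mathbb{C}$ if $v(i)M_{i}=\lambda(i)v(i+1)$ for all $i$; a sequence $u(i)$ of nonzero column vectors is a right eigenvector with eigenvalues $\alpha(i)\in\mathbb{C}$ if $M_{i}u(i+1)=\alpha(i)u(i)$ for all $i$. *)

theory Defs
  imports "HOL-Analysis.Analysis"
begin

text \<open>Sequences are indexed by i \<ge> 1 (values at index 0 are irrelevant).
  Row vectors and column vectors are both represented as complex^2;
  v v* A is the row-vector-times-matrix product, A *v u the matrix-times-column product.\<close>

definition left_eigenvector ::
  "(nat \<Rightarrow> complex^2^2) \<Rightarrow> (nat \<Rightarrow> complex^2) \<Rightarrow> (nat \<Rightarrow> complex) \<Rightarrow> bool" where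
  "left_eigenvector M v lam \<longleftrightarrow>
     (\<forall>i\<ge>1. v i \<noteq> 0) \<and> (\<forall>i\<ge>1. v i v* M i = lam i *s v (i + 1))"

definition right_eigenvector ::
  "(nat \<Rightarrow> complex^2^2) \<Rightarrow> (nat \<Rightarrow> complex^2) \<Rightarrow> (nat \<Rightarrow> complex) \<Rightarrow> bool" where
  "right_eigenvector M u alpha \<longleftrightarrow>
     (\<forall>i\<ge>1. u i \<noteq> 0) \<and> (\<forall>i\<ge>1. M i *v u (i + 1) = alpha i *s u i)"

definition mat2 :: "'a \<Rightarrow> 'a \<Rightarrow> 'a \<Rightarrow> 'a \<Rightarrow> 'a^2^2" where
  "mat2 a b c d = (\<chi> i j. if i = 1 then (if j = 1 then a else b) else (if j = 1 then c else d))"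

definition vec2 :: "'a \<Rightarrow> 'a \<Rightarrow> 'a^2" where
  "vec2 x y = (\<chi> i. if i = 1 then x else y)"

end

theory Submission
  imports Defs
begin

text \<open>Everything rests on the fact that in dimension two the orthogonal complement of a nonzero
  vector, with respect to the symmetric bilinear form x1 y1 + x2 y2, is a line, spanned by the
  rotated vector perp2 v = (v2, -v1). Hence v M is a multiple of v' iff (v M) perp2 v' = 0, and
  M perp2 v' is a multiple of perp2 v iff v (M perp2 v') = 0; the two conditions agree by
  associativity. The triangular form is then a direct computation, and the determinant identity
  follows from it because det U = 1 for every U of the given lower triangular shape.\<close>

definition vec_dot :: "'a::comm_semiring_1^'n \<Rightarrow> 'a^'n \<Rightarrow> 'a" where
  "vec_dot x y = (\<Sum>k\<in>UNIV. x $ k * y $ k)"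

definition perp2 :: "'a::ring_1^2 \<Rightarrow> 'a^2" where
  "perp2 v = vec2 (v $ 2) (- v $ 1)"

lemma vec2_nth [simp]: "vec2 x y $ 1 = x" "vec2 x y $ 2 = y"
  by (simp_all add: vec2_def)

lemma vec2_eq_iff: "(v::'a^2) = w \<longleftrightarrow> v $ 1 = w $ 1 \<and> v $ 2 = w $ 2"
  by (metis exhaust_2 vec_eq_iff)

lemma vec2_eq_0_iff: "(v::'a::zero^2) = 0 \<longleftrightarrow> v $ 1 = 0 \<and> v $ 2 = 0"
  by (simp add: vec2_eq_iff)

lemma mat2_nth [simp]:
  "mat2 a b c d $ 1 $ 1 = a" "mat2 a b c d $ 1 $ 2 = b"
  "mat2 a b c d $ 2 $ 1 = c" "mat2 a b c d $ 2 $ 2 = d"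
  by (simp_all add: mat2_def)

lemma mat2_eq_iff:
  "(A::'a^2^2) = B \<longleftrightarrow> A$1$1 = B$1$1 \<and> A$1$2 = B$1$2 \<and> A$2$1 = B$2$1 \<and> A$2$2 = B$2$2"
  by (metis vec2_eq_iff)

lemma matrix_matrix_mult_nth_2:
  "((A::'a::semiring_1^2^2) ** B) $ i $ j = A$i$1 * B$1$j + A$i$2 * B$2$j"
  by (simp add: matrix_matrix_mult_def sum_2)

lemma det_mat2: "det (mat2 a b c d :: 'a::comm_ring_1^2^2) = a * d - b * c"
  by (simp add: det_2)

lemma perp2_vec2 [simp]: "perp2 (vec2 x y) = vec2 y (- x)"
  by (simp add: perp2_def)

lemma perp2_eq_0_iff [simp]: "perp2 v = 0 \<longleftrightarrow> v = 0"
  by (auto simp: perp2_def vec2_eq_0_iff)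

lemma vec_dot_2: "vec_dot (x::'a::comm_semiring_1^2) y = x$1 * y$1 + x$2 * y$2"
  by (simp add: vec_dot_def sum_2)

lemma vec_dot_vector_matrix_mult: "vec_dot (x v* A) y = vec_dot x (A *v y)"
proof -
  have "vec_dot (x v* A) y = (\<Sum>j\<in>UNIV. \<Sum>i\<in>UNIV. x $ i * A $ i $ j * y $ j)"
    by (simp add: vec_dot_def vector_matrix_mult_def sum_distrib_right)
  also have "\<dots> = (\<Sum>i\<in>UNIV. \<Sum>j\<in>UNIV. x $ i * (A $ i $ j * y $ j))"
    by (subst sum.swap) (simp add: mult.assoc)
  also have "\<dots> = vec_dot x (A *v y)"
    by (simp add: vec_dot_def matrix_vector_mult_def sum_distrib_left)
  finally show ?thesis .
qed

lemma matrix_inv_eqI: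
  fixes A :: "'a::semiring_1^'n^'m"
  assumes "A ** B = mat 1" "B ** A = mat 1"
  shows "matrix_inv A = B"
proof -
  let ?C = "matrix_inv A"
  have C: "A ** ?C = mat 1" "?C ** A = mat 1"
    unfolding matrix_inv_def by (rule someI2[where a = B], use assms in auto)+
  have "?C = ?C ** (A ** B)" using assms by (simp add: matrix_mul_rid)
  also have "\<dots> = B" using C by (simp add: matrix_mul_assoc matrix_mul_lid)
  finally show ?thesis .
qed

lemma ex_scale_eq_iff_vec_dot_perp2:
  fixes w z :: "'a::field^2"
  assumes "w \<noteq> 0"
  shows "(\<exists>l. z = l *s w) \<longleftrightarrow> vec_dot z (perp2 w) = 0"
proof
  assume "\<exists>l. z = l *s w"
  then show "vec_dot z (perp2 w) = 0" by (auto simp: vec_dot_2 perp2_def algebra_simps)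
next
  assume dot: "vec_dot z (perp2 w) = 0"
  then have cross: "z$1 * w$2 = z$2 * w$1" by (simp add: vec_dot_2 perp2_def)
  show "\<exists>l. z = l *s w"
  proof (cases "w $ 1 = 0")
    case True
    with assms have "w $ 2 \<noteq> 0" by (simp add: vec2_eq_0_iff)
    with cross True show ?thesis
      by (intro exI[of _ "z$2 / w$2"]) (auto simp: vec2_eq_iff field_simps)
  next
    case False
    with cross show ?thesis
      by (intro exI[of _ "z$1 / w$1"]) (auto simp: vec2_eq_iff field_simps)
  qed
qed

lemma ex_scale_perp2_iff_vec_dot:
  fixes v z :: "'a::field^2"
  assumes "v \<noteq> 0"
  shows "(\<exists>a. z = a *s perp2 v) \<longleftrightarrow> vec_dot v z = 0"
proof -
  have "vec_dot z (perp2 (perp2 v)) = - vec_dot v z"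
    by (simp add: perp2_def vec_dot_2 mult.commute)
  with ex_scale_eq_iff_vec_dot_perp2[of "perp2 v" z] assms show ?thesis
    by simp
qed

lemma left_eigen_step_iff_right_eigen_step:
  fixes M :: "'a::field^2^2"
  assumes "v \<noteq> 0" "v' \<noteq> 0"
  shows "(\<exists>l. v v* M = l *s v') \<longleftrightarrow> (\<exists>a. M *v perp2 v' = a *s perp2 v)"
proof -
  have "(\<exists>l. v v* M = l *s v') \<longleftrightarrow> vec_dot (v v* M) (perp2 v') = 0"
    using assms(2) by (rule ex_scale_eq_iff_vec_dot_perp2)
  also have "\<dots> \<longleftrightarrow> vec_dot v (M *v perp2 v') = 0"
    by (simp add: vec_dot_vector_matrix_mult)
  also have "\<dots> \<longleftrightarrow> (\<exists>a. M *v perp2 v' = a *s perp2 v)"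
    using assms(1) by (rule ex_scale_perp2_iff_vec_dot[symmetric])
  finally show ?thesis .
qed

lemma ex_left_eigenvector_iff:
  "(\<exists>lam. left_eigenvector M v lam) \<longleftrightarrow>
     (\<forall>i\<ge>1. v i \<noteq> 0) \<and> (\<forall>i\<ge>1. \<exists>l. v i v* M i = l *s v (i + 1))"
proof
  assume "(\<forall>i\<ge>1. v i \<noteq> 0) \<and> (\<forall>i\<ge>1. \<exists>l. v i v* M i = l *s v (i + 1))"
  moreover from this obtain lam where "\<forall>i. 1 \<le> i \<longrightarrow> v i v* M i = lam i *s v (i + 1)"
    using choice[of "\<lambda>i l. 1 \<le> i \<longrightarrow> v i v* M i = l *s v (i + 1)"] by blast
  ultimately show "\<exists>lam. left_eigenvector M v lam"
    unfolding left_eigenvector_def by blast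
qed (auto simp: left_eigenvector_def)

lemma ex_right_eigenvector_iff:
  "(\<exists>alpha. right_eigenvector M u alpha) \<longleftrightarrow>
     (\<forall>i\<ge>1. u i \<noteq> 0) \<and> (\<forall>i\<ge>1. \<exists>a. M i *v u (i + 1) = a *s u i)"
proof
  assume "(\<forall>i\<ge>1. u i \<noteq> 0) \<and> (\<forall>i\<ge>1. \<exists>a. M i *v u (i + 1) = a *s u i)"
  moreover from this obtain alpha where "\<forall>i. 1 \<le> i \<longrightarrow> M i *v u (i + 1) = alpha i *s u i"
    using choice[of "\<lambda>i a. 1 \<le> i \<longrightarrow> M i *v u (i + 1) = a *s u i"] by blast
  ultimately show "\<exists>alpha. right_eigenvector M u alpha"
    unfolding right_eigenvector_def by blast
qed (auto simp: right_eigenvector_def)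

lemma ex_left_eigenvector_iff_ex_right_eigenvector_perp2:
  assumes nz: "\<forall>i\<ge>1. v i \<noteq> 0"
  shows "(\<exists>lam. left_eigenvector M v lam) \<longleftrightarrow>
         (\<exists>alpha. right_eigenvector M (\<lambda>i. perp2 (v i)) alpha)"
proof -
  have "(\<exists>l. v i v* M i = l *s v (i + 1)) \<longleftrightarrow>
        (\<exists>a. M i *v perp2 (v (i + 1)) = a *s perp2 (v i))" if "i \<ge> 1" for i
    using nz that by (intro left_eigen_step_iff_right_eigen_step) auto
  with nz show ?thesis
    unfolding ex_left_eigenvector_iff ex_right_eigenvector_iff by simp
qed

lemma matrix_inv_mat2_lower:
  fixes F :: "'a::field"
  assumes "F \<noteq> 0"
  shows "matrix_inv (mat2 (inverse F) 0 G F) = mat2 F 0 (- G) (inverse F)"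
  using assms
  by (intro matrix_inv_eqI) (auto simp: mat2_eq_iff matrix_matrix_mult_nth_2 mat_def)

lemma det_conj_mat2_lower:
  fixes M :: "'a::field^2^2"
  assumes "F \<noteq> 0" "F' \<noteq> 0"
  shows "det (mat2 (inverse F) 0 G F ** M ** matrix_inv (mat2 (inverse F') 0 G' F')) = det M"
  using assms by (simp add: matrix_inv_mat2_lower det_mul det_mat2)

lemma conj_mat2_lower_upper_triangular:
  fixes M :: "'a::field^2^2"
  assumes "F \<noteq> 0" "F' \<noteq> 0"
    and left: "vec2 G F v* M = lam *s vec2 G' F'"
    and right: "M *v vec2 F' (- G') = alpha *s vec2 F (- G)"
  shows "mat2 (inverse F) 0 G F ** M ** matrix_inv (mat2 (inverse F') 0 G' F')
       = mat2 alpha (M$1$2 / (F * F')) 0 lam"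
proof -
  have l1: "G * M$1$1 + F * M$2$1 = lam * G'" and l2: "G * M$1$2 + F * M$2$2 = lam * F'"
    using left by (auto simp: vec2_eq_iff vector_matrix_mult_def sum_2 mult.commute)
  have r1: "M$1$1 * F' - M$1$2 * G' = alpha * F"
    using right by (auto simp: vec2_eq_iff matrix_vector_mult_def sum_2)
  have lower_left_entry: "(G * M$1$1 + F * M$2$1) * F' - (G * M$1$2 + F * M$2$2) * G' = 0"
    by (simp add: l1 l2)
  with l2 r1 assms show ?thesis
    unfolding matrix_inv_mat2_lower[OF \<open>F' \<noteq> 0\<close>]
    by (simp add: mat2_eq_iff matrix_matrix_mult_nth_2 field_simps)
qed

lemma eigenvalue_product_eq_det:
  fixes M :: "'a::field^2^2"
  assumes "F \<noteq> 0" "F' \<noteq> 0"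
    and "vec2 G F v* M = lam *s vec2 G' F'"
    and "M *v vec2 F' (- G') = alpha *s vec2 F (- G)"
  shows "alpha * lam = det M"
proof -
  have "alpha * lam = det (mat2 alpha (M$1$2 / (F * F')) 0 lam)"
    by (simp add: det_mat2)
  also have "\<dots> = det M"
    using assms by (simp flip: conj_mat2_lower_upper_triangular add: det_conj_mat2_lower)
  finally show ?thesis .
qed

theorem lemma26:
  fixes M :: "nat \<Rightarrow> complex^2^2" and G F :: "nat \<Rightarrow> complex"
  assumes nz: "\<forall>i\<ge>1. vec2 (G i) (F i) \<noteq> 0"
  shows "((\<exists>lam. left_eigenvector M (\<lambda>i. vec2 (G i) (F i)) lam) \<longleftrightarrow>
           (\<exists>alpha. right_eigenvector M (\<lambda>i. vec2 (F i) (- G i)) alpha))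
       \<and> (\<forall>lam alpha. left_eigenvector M (\<lambda>i. vec2 (G i) (F i)) lam \<longrightarrow>
           right_eigenvector M (\<lambda>i. vec2 (F i) (- G i)) alpha \<longrightarrow>
           (\<forall>i\<ge>1. F i \<noteq> 0) \<longrightarrow>
           (\<forall>i\<ge>1.
              mat2 (inverse (F i)) 0 (G i) (F i) ** M i **
                matrix_inv (mat2 (inverse (F (i + 1))) 0 (G (i + 1)) (F (i + 1)))
              = mat2 (alpha i) ((M i $ 1 $ 2) / (F i * F (i + 1))) 0 (lam i)
              \<and> alpha i * lam i = det (M i)))"
proof -
  have "(\<lambda>i. vec2 (F i) (- G i)) = (\<lambda>i. perp2 (vec2 (G i) (F i)))"
    by simp
  then have "(\<exists>lam. left_eigenvector M (\<lambda>i. vec2 (G i) (F i)) lam) \<longleftrightarrow>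
        (\<exists>alpha. right_eigenvector M (\<lambda>i. vec2 (F i) (- G i)) alpha)"
    using ex_left_eigenvector_iff_ex_right_eigenvector_perp2[OF nz] by simp
  moreover have
    "mat2 (inverse (F i)) 0 (G i) (F i) ** M i **
        matrix_inv (mat2 (inverse (F (i + 1))) 0 (G (i + 1)) (F (i + 1)))
      = mat2 (alpha i) ((M i $ 1 $ 2) / (F i * F (i + 1))) 0 (lam i)
     \<and> alpha i * lam i = det (M i)"
    if "left_eigenvector M (\<lambda>i. vec2 (G i) (F i)) lam"
      and "right_eigenvector M (\<lambda>i. vec2 (F i) (- G i)) alpha"
      and "\<forall>i\<ge>1. F i \<noteq> 0" and "i \<ge> 1"
    for lam alpha :: "nat \<Rightarrow> complex" and i :: nat
  proof -
    have F: "F i \<noteq> 0" "F (i + 1) \<noteq> 0"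
      using that by auto
    have left: "vec2 (G i) (F i) v* M i = lam i *s vec2 (G (i + 1)) (F (i + 1))"
      and right: "M i *v vec2 (F (i + 1)) (- G (i + 1)) = alpha i *s vec2 (F i) (- G i)"
      using that by (auto simp: left_eigenvector_def right_eigenvector_def)
    show ?thesis
      using conj_mat2_lower_upper_triangular[OF F left right]
        eigenvalue_product_eq_det[OF F left right] by blast
  qed
  ultimately show ?thesis
    by blast
qed

end
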